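(* Let $l_1,l_2,l_3$ be positive integers with $l_1=\min\{l_1,l_2,l_3\}$, $l_2\ge 2$, $l_3\ge 2$, let $G=\Theta(l_1,l_2,l_3)$, and let $L$ be an $m$-assignment for $G$ with $m\ge 3$. Suppose $q$ and $s$ are adjacent vertices of $G$, $x\in L(q)$, $y\in L(s)$, and $x\ne y$. Then there are at least $(m-1)^{l_1+l_2+l_3-5}(m-2)^2$ proper $L$-colorings of $G$ that color $q$ with $x$ and $s$ with $y$.
   Context: For positive integers $l_1,l_2,l_3$, the theta graph $\Theta(l_1,l_2,l_3)$ consists of two end vertices joined by three internally disjoint paths of lengths (numbers of edges) $l_1,l_2,l_3$. An $m$-assignment $L$ for a graph $G$ assigns to each vertex $v$ a set $L(v)$ of exactly $m$ colors; a proper $L$-coloring is a proper vertex coloring $f$ of $G$ with $f(v)\in L(v)$ for every vertex $v$. *)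

theory Defs
  imports Main
begin

text \<open>Vertices of the theta graph Theta(l1,l2,l3): the two end vertices and
  the internal vertex at position j (1 <= j <= l_i - 1) of path i (i = 1,2,3).\<close>
datatype tvert = EndA | EndB | Inner nat nat

definition path_len :: "nat \<Rightarrow> nat \<Rightarrow> nat \<Rightarrow> nat \<Rightarrow> nat" where
  "path_len l1 l2 l3 i = (if i = 1 then l1 else if i = 2 then l2 else l3)"

definition tpos :: "nat \<Rightarrow> nat \<Rightarrow> nat \<Rightarrow> nat \<Rightarrow> nat \<Rightarrow> tvert" where
  "tpos l1 l2 l3 i j = (if j = 0 then EndA else if j = path_len l1 l2 l3 i then EndB else Inner i j)"

definition theta_V :: "nat \<Rightarrow> nat \<Rightarrow> nat \<Rightarrow> tvert set" where
  "theta_V l1 l2 l3 = {EndA, EndB} \<union>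
     {Inner i j | i j. i \<in> {1,2,3} \<and> 1 \<le> j \<and> j < path_len l1 l2 l3 i}"

definition theta_E :: "nat \<Rightarrow> nat \<Rightarrow> nat \<Rightarrow> tvert set set" where
  "theta_E l1 l2 l3 = {{tpos l1 l2 l3 i j, tpos l1 l2 l3 i (Suc j)} | i j.
     i \<in> {1,2,3} \<and> j < path_len l1 l2 l3 i}"

text \<open>Proper L-colorings of a graph (V,E), taken extensionally (undefined off V)
  so that they can be counted.\<close>
definition proper_L_colorings :: "'v set \<Rightarrow> 'v set set \<Rightarrow> ('v \<Rightarrow> 'c set) \<Rightarrow> ('v \<Rightarrow> 'c) set" where
  "proper_L_colorings V E L = {f. (\<forall>v\<in>V. f v \<in> L v) \<and> (\<forall>v. v \<notin> V \<longrightarrow> f v = undefined)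
      \<and> (\<forall>u v. {u, v} \<in> E \<and> u \<noteq> v \<longrightarrow> f u \<noteq> f v)}"

end

theory Submission
  imports Defs "HOL-Library.FuncSet"
begin

(* Color q and s first and then the remaining vertices one at a time: a vertex with at most d
   already colored neighbours has at least m - d admissible colors, so the number of colorings is
   at least the product of these numbers.  The edge qs lies on one path of the theta graph, which
   together with a second path forms a cycle of length at least 3; the third path, of length at
   least 2, is an ear joining the two end vertices.  Color the cycle starting after s and going
   round to the vertex before q, then the inner vertices of the ear from one end vertex towards
   the other.  Each vertex then has exactly one earlier neighbour, except the last vertex of the
   cycle (also adjacent to q) and the last vertex of the ear (also adjacent to the second end
   vertex), which have two.  Of the l1 + l2 + l3 - 1 vertices, l1 + l2 + l3 - 5 thus contribute a
   factor m - 1 and two contribute m - 2. *)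

definition colorings_extending ::
    "'v set set \<Rightarrow> ('v \<Rightarrow> 'c set) \<Rightarrow> ('v \<Rightarrow> 'c) \<Rightarrow> 'v set \<Rightarrow> 'v set \<Rightarrow> ('v \<Rightarrow> 'c) set" where
  "colorings_extending E L c P S = {f. (\<forall>v\<in>S. f v \<in> L v) \<and> (\<forall>v. v \<notin> S \<longrightarrow> f v = undefined)
     \<and> (\<forall>u w. u \<in> S \<longrightarrow> w \<in> S \<longrightarrow> {u, w} \<in> E \<longrightarrow> u \<noteq> w \<longrightarrow> f u \<noteq> f w)
     \<and> (\<forall>v\<in>P. f v = c v)}"

lemma finite_colorings_extending:
  assumes "finite S" "\<forall>v\<in>S. finite (L v)"
  shows "finite (colorings_extending E L c P S)"
proof (rule finite_subset)
  show "colorings_extending E L c P S \<subseteq> PiE S L"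
    by (auto simp: colorings_extending_def PiE_def extensional_def)
  show "finite (PiE S L)"
    using assms by (intro finite_PiE) auto
qed

lemma restrict_in_colorings_extending:
  assumes "\<forall>v\<in>P. c v \<in> L v" "\<forall>u\<in>P. \<forall>w\<in>P. u \<noteq> w \<longrightarrow> c u \<noteq> c w"
  shows "restrict c P \<in> colorings_extending E L c P P"
  using assms by (auto simp: colorings_extending_def)

lemma fun_upd_in_colorings_extending:
  assumes "g \<in> colorings_extending E L c P S" "v \<notin> S" "v \<notin> P"
    and "a \<in> L v" "a \<notin> g ` {u\<in>S. {u, v} \<in> E \<and> u \<noteq> v}"
  shows "g(v := a) \<in> colorings_extending E L c P (insert v S)"
  using assms unfolding colorings_extending_def by (auto simp: insert_commute)

lemma card_colorings_extending_insert:
  assumes "finite S" "\<forall>u\<in>S. finite (L u)" "finite (L v)" "card (L v) = m"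
    and "v \<notin> S" "v \<notin> P" and deg: "card {u\<in>S. {u, v} \<in> E \<and> u \<noteq> v} \<le> d"
  shows "card (colorings_extending E L c P S) * (m - d)
           \<le> card (colorings_extending E L c P (insert v S))"
proof -
  define N where "N = {u\<in>S. {u, v} \<in> E \<and> u \<noteq> v}"
  define C where "C = colorings_extending E L c P S"
  define X where "X = (SIGMA g:C. L v - g ` N)"
  have "m - d \<le> card (L v - g ` N)" for g
  proof -
    have "card (g ` N) \<le> d"
      using card_image_le[of N g] deg \<open>finite S\<close> unfolding N_def by force
    moreover have "card (L v) - card (g ` N) \<le> card (L v - g ` N)"
      by (rule diff_card_le_card_Diff) (use \<open>finite S\<close> in \<open>simp add: N_def\<close>)
    ultimately show ?thesis using \<open>card (L v) = m\<close> by linarith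
  qed
  then have "card C * (m - d) \<le> (\<Sum>g\<in>C. card (L v - g ` N))"
    using sum_mono[of C "\<lambda>_. m - d"] by simp
  also have "\<dots> = card X"
    unfolding X_def C_def using assms(1-3) by (simp add: card_SigmaI finite_colorings_extending)
  also have "\<dots> = card ((\<lambda>(g, a). g(v := a)) ` X)"
  proof (rule card_image[symmetric], rule inj_onI, clarify)
    fix g1 a1 g2 a2
    assume "(g1, a1) \<in> X" "(g2, a2) \<in> X" and eq: "g1(v := a1) = g2(v := a2)"
    then have "g1 v = g2 v"
      using \<open>v \<notin> S\<close> by (simp add: X_def C_def colorings_extending_def)
    with eq show "g1 = g2 \<and> a1 = a2"
      by (metis fun_upd_same fun_upd_triv fun_upd_upd)
  qed
  also have "\<dots> \<le> card (colorings_extending E L c P (insert v S))"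
  proof (rule card_mono)
    show "finite (colorings_extending E L c P (insert v S))"
      using assms by (intro finite_colorings_extending) auto
    show "(\<lambda>(g, a). g(v := a)) ` X \<subseteq> colorings_extending E L c P (insert v S)"
      using assms(5,6) by (auto simp: X_def C_def N_def intro!: fun_upd_in_colorings_extending)
  qed
  finally show ?thesis unfolding C_def .
qed

lemma card_colorings_extending_greedy:
  fixes r :: "'v \<Rightarrow> 'a::linorder"
  assumes "finite V" "P \<subseteq> V" and L: "\<forall>v\<in>V. finite (L v) \<and> card (L v) = m"
    and r_inj: "inj_on r (V - P)" and r_P: "\<forall>v\<in>V - P. \<forall>u\<in>P. r u < r v"
    and deg: "\<forall>v\<in>V - P. card {u\<in>V. {u, v} \<in> E \<and> u \<noteq> v \<and> r u < r v} \<le> d v"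
  shows "card (colorings_extending E L c P P) * (\<Prod>v\<in>V - P. m - d v)
           \<le> card (colorings_extending E L c P V)"
proof -
  have "card (colorings_extending E L c P P) * (\<Prod>v\<in>S. m - d v)
          \<le> card (colorings_extending E L c P (P \<union> S))" if "finite S" "S \<subseteq> V - P" for S
    using that
  proof (induction S rule: finite_ranking_induct[where f = r])
    case empty
    then show ?case by simp
  next
    case (insert v S)
    show ?case
    proof (cases "v \<in> S")
      case True
      then show ?thesis using insert by (simp add: insert_absorb)
    next
      case False
      have v: "v \<in> V - P" and S: "S \<subseteq> V - P"
        using insert.prems by auto
      have earlier: "r u < r v" if "u \<in> P \<union> S" "u \<noteq> v" for u
      proof (cases "u \<in> P")
        case True
        then show ?thesis using r_P v by blast
      next
        case False
        then have "r u \<le> r v" "r u \<noteq> r v"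
          using that insert.hyps(2) inj_onD[OF r_inj] v S by auto
        then show ?thesis by simp
      qed
      have "card {u\<in>P \<union> S. {u, v} \<in> E \<and> u \<noteq> v}
              \<le> card {u\<in>V. {u, v} \<in> E \<and> u \<noteq> v \<and> r u < r v}"
        using \<open>finite V\<close> \<open>P \<subseteq> V\<close> S earlier by (intro card_mono) auto
      also have "\<dots> \<le> d v"
        using deg v by blast
      finally have "card {u\<in>P \<union> S. {u, v} \<in> E \<and> u \<noteq> v} \<le> d v" .
      then have step: "card (colorings_extending E L c P (P \<union> S)) * (m - d v)
                         \<le> card (colorings_extending E L c P (insert v (P \<union> S)))"
        using insert.prems False L \<open>finite S\<close> \<open>P \<subseteq> V\<close> \<open>finite V\<close>
        by (intro card_colorings_extending_insert) (auto intro: finite_subset)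
      have "card (colorings_extending E L c P P) * (\<Prod>u\<in>insert v S. m - d u)
              = card (colorings_extending E L c P P) * (\<Prod>u\<in>S. m - d u) * (m - d v)"
        using \<open>finite S\<close> False by simp
      also have "\<dots> \<le> card (colorings_extending E L c P (P \<union> S)) * (m - d v)"
        using insert by (intro mult_right_mono) auto
      also have "\<dots> \<le> card (colorings_extending E L c P (P \<union> insert v S))"
        using step by simp
      finally show ?thesis .
    qed
  qed
  from this[of "V - P"] show ?thesis
    using assms(1,2) by (simp add: Un_absorb1)
qed

lemma proper_L_colorings_fixing_pair_eq:
  assumes "\<forall>e\<in>E. e \<subseteq> V" "q \<noteq> s"
  shows "{f \<in> proper_L_colorings V E L. f q = x \<and> f s = y}
           = colorings_extending E L (\<lambda>v. if v = q then x else y) {q, s} V"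
proof -
  have "(\<forall>u v. {u, v} \<in> E \<and> u \<noteq> v \<longrightarrow> f u \<noteq> f v) \<longleftrightarrow>
        (\<forall>u w. u \<in> V \<longrightarrow> w \<in> V \<longrightarrow> {u, w} \<in> E \<longrightarrow> u \<noteq> w \<longrightarrow> f u \<noteq> f w)" for f :: "'a \<Rightarrow> 'b"
    using assms(1) by blast
  then show ?thesis
    using assms(2) unfolding proper_L_colorings_def colorings_extending_def by auto
qed

lemma card_theta_V:
  assumes "l1 \<ge> 1" "l2 \<ge> 1" "l3 \<ge> 1"
  shows "card (theta_V l1 l2 l3) = l1 + l2 + l3 - 1"
proof -
  define I where "I = (\<lambda>a l. Inner a ` {1..<l})"
  have fin: "finite (I a l)" for a l
    by (simp add: I_def)
  have card_I: "card (I a l) = l - 1" for a l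
    by (simp add: I_def card_image inj_on_def)
  have "theta_V l1 l2 l3 = {EndA, EndB} \<union> (I 1 l1 \<union> (I 2 l2 \<union> I 3 l3))" (is "_ = ?U")
  proof (rule set_eqI)
    show "v \<in> theta_V l1 l2 l3 \<longleftrightarrow> v \<in> ?U" for v
      unfolding theta_V_def path_len_def I_def by (cases v) auto
  qed
  also have "card \<dots> = 2 + card (I 1 l1 \<union> (I 2 l2 \<union> I 3 l3))"
    by (subst card_Un_disjoint) (auto simp: fin I_def)
  also have "card (I 1 l1 \<union> (I 2 l2 \<union> I 3 l3)) = card (I 1 l1) + card (I 2 l2 \<union> I 3 l3)"
    by (rule card_Un_disjoint) (auto simp: fin I_def)
  also have "card (I 2 l2 \<union> I 3 l3) = card (I 2 l2) + card (I 3 l3)"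
    by (rule card_Un_disjoint) (auto simp: fin I_def)
  finally show ?thesis using assms card_I by simp
qed

lemma tpos_in_theta_V:
  "i \<in> {1, 2, 3} \<Longrightarrow> j \<le> path_len l1 l2 l3 i \<Longrightarrow> tpos l1 l2 l3 i j \<in> theta_V l1 l2 l3"
  unfolding tpos_def theta_V_def by auto

lemma theta_E_subset_theta_V: "e \<in> theta_E l1 l2 l3 \<Longrightarrow> e \<subseteq> theta_V l1 l2 l3"
  unfolding theta_E_def by (auto intro!: tpos_in_theta_V)

lemma finite_theta_V: "finite (theta_V l1 l2 l3)"
proof (rule finite_subset)
  show "theta_V l1 l2 l3 \<subseteq> {EndA, EndB} \<union> case_prod Inner ` ({1, 2, 3} \<times> {..<l1 + l2 + l3})"
    by (auto simp: theta_V_def path_len_def)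
qed simp

(* Paths i and k form a cycle through the edge between positions j and j + 1 of path i;
   path t is the ear. *)
locale theta_cycle_ear =
  fixes l1 l2 l3 i t k j :: nat
  assumes paths: "{i, t, k} = {1, 2, 3}" and distinct: "i \<noteq> t" "i \<noteq> k" "t \<noteq> k"
    and len_k: "path_len l1 l2 l3 k \<ge> 1"
    and len_t: "path_len l1 l2 l3 t \<ge> 2"
    and len_cycle: "path_len l1 l2 l3 i + path_len l1 l2 l3 k \<ge> 3"
    and edge_pos: "j < path_len l1 l2 l3 i"
begin

abbreviation len :: "nat \<Rightarrow> nat" where "len a \<equiv> path_len l1 l2 l3 a"
abbreviation tp :: "nat \<Rightarrow> nat \<Rightarrow> tvert" where "tp a p \<equiv> tpos l1 l2 l3 a p"

definition cycle_len :: nat where "cycle_len = len i + len k"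

definition cyc :: "nat \<Rightarrow> tvert" where
  "cyc z = (if z = 0 then EndA else if z < len i then Inner i z else if z = len i then EndB
            else Inner k (cycle_len - z))"

definition cyc_succ :: "nat \<Rightarrow> nat" where
  "cyc_succ z = (if z + 1 = cycle_len then 0 else z + 1)"

definition cyc_pred :: "nat \<Rightarrow> nat" where
  "cyc_pred z = (if z = 0 then cycle_len - 1 else z - 1)"

definition cyc_rank :: "nat \<Rightarrow> nat" where
  "cyc_rank z = (if z = j \<or> z = j + 1 then 0 else if j + 1 < z then z - j - 1
                 else z + cycle_len - j - 1)"

(* The coloring order: cyc j and cyc (j + 1) first, then cyc (j + 2) and onwards round the cycle
   up to cycle_last, then the ear from Inner t 1 to ear_last. *)
definition rank :: "tvert \<Rightarrow> nat" where
  "rank v = (case v of EndA \<Rightarrow> cyc_rank 0 | EndB \<Rightarrow> cyc_rank (len i)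
     | Inner a p \<Rightarrow> if a = t then cycle_len - 2 + p
                    else if a = i then cyc_rank p else cyc_rank (cycle_len - p))"

definition cycle_last :: tvert where "cycle_last = cyc (cyc_pred j)"

definition ear_last :: tvert where "ear_last = Inner t (len t - 1)"

definition back_degree :: "tvert \<Rightarrow> nat" where
  "back_degree v = (if v = cycle_last \<or> v = ear_last then 2 else 1)"

abbreviation earlier_neighbours :: "tvert \<Rightarrow> tvert set" where
  "earlier_neighbours v \<equiv>
     {u \<in> theta_V l1 l2 l3. {u, v} \<in> theta_E l1 l2 l3 \<and> u \<noteq> v \<and> rank u < rank v}"

lemma path_indices: "i \<in> {1, 2, 3}" "t \<in> {1, 2, 3}" "k \<in> {1, 2, 3}"
  using paths by auto

lemma cycle_len_ge_3: "cycle_len \<ge> 3"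
  using len_cycle by (simp add: cycle_len_def)

lemma edge_in_cycle: "j + 2 \<le> cycle_len"
  using edge_pos len_k by (simp add: cycle_len_def)

lemma cyc_inj: "z < cycle_len \<Longrightarrow> z' < cycle_len \<Longrightarrow> cyc z = cyc z' \<Longrightarrow> z = z'"
  unfolding cyc_def using distinct by (auto simp: cycle_len_def split: if_splits)

lemma cyc_edge_ne: "cyc j \<noteq> cyc (Suc j)"
  using cyc_inj[of j "Suc j"] edge_in_cycle by auto

lemma cyc_ne_ear: "cyc z \<noteq> Inner t p" "Inner t p \<noteq> cyc z"
  unfolding cyc_def using distinct by auto

lemma tpos_i: "p \<le> len i \<Longrightarrow> tp i p = cyc p"
  unfolding tpos_def cyc_def by auto

lemma tpos_k: "p \<le> len k \<Longrightarrow> tp k p = cyc (if p = 0 then 0 else cycle_len - p)"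
  unfolding tpos_def cyc_def using len_k edge_pos by (auto simp: cycle_len_def)

lemma cyc_in_theta_V: "z < cycle_len \<Longrightarrow> cyc z \<in> theta_V l1 l2 l3"
  unfolding cyc_def theta_V_def using path_indices by (auto simp: cycle_len_def)

lemma ear_in_theta_V: "1 \<le> p \<Longrightarrow> p < len t \<Longrightarrow> Inner t p \<in> theta_V l1 l2 l3"
  unfolding theta_V_def using path_indices by auto

lemma cyc_succ_less: "z < cycle_len \<Longrightarrow> cyc_succ z < cycle_len"
  unfolding cyc_succ_def using cycle_len_ge_3 by auto

lemma cyc_pred_succ: "z < cycle_len \<Longrightarrow> cyc_pred (cyc_succ z) = z"
  unfolding cyc_pred_def cyc_succ_def using cycle_len_ge_3 by auto

lemma cyc_pred_edge: "cyc_pred j \<noteq> j" "cyc_pred j \<noteq> j + 1" "cyc_pred j < cycle_len"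
  unfolding cyc_pred_def using edge_in_cycle cycle_len_ge_3 by auto

lemma cyc_rank_le: "z < cycle_len \<Longrightarrow> cyc_rank z \<le> cycle_len - 2"
  unfolding cyc_rank_def using edge_in_cycle by auto

lemma cyc_rank_pos: "z < cycle_len \<Longrightarrow> z \<noteq> j \<Longrightarrow> z \<noteq> j + 1 \<Longrightarrow> 0 < cyc_rank z"
  unfolding cyc_rank_def using edge_in_cycle by auto

lemma cyc_rank_inj:
  "\<lbrakk>z < cycle_len; z' < cycle_len; z \<notin> {j, j + 1}; z' \<notin> {j, j + 1}; cyc_rank z = cyc_rank z'\<rbrakk>
     \<Longrightarrow> z = z'"
  unfolding cyc_rank_def using edge_in_cycle by (auto split: if_splits)

lemma cyc_rank_succ_lessD:
  assumes "z < cycle_len" "z \<noteq> j" "z \<noteq> j + 1" "cyc_rank (cyc_succ z) < cyc_rank z"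
  shows "z = cyc_pred j" "cyc_succ z = j"
  using assms edge_in_cycle
  unfolding cyc_rank_def cyc_succ_def cyc_pred_def by (auto split: if_splits)

lemma rank_cyc: "z < cycle_len \<Longrightarrow> rank (cyc z) = cyc_rank z"
  unfolding cyc_def rank_def using distinct by (auto simp: cycle_len_def)

lemma rank_ear: "rank (Inner t p) = cycle_len - 2 + p"
  unfolding rank_def by simp

lemma rank_cyc_less_ear: "z < cycle_len \<Longrightarrow> 1 \<le> p \<Longrightarrow> rank (cyc z) < rank (Inner t p)"
  using rank_cyc rank_ear cyc_rank_le[of z] cycle_len_ge_3 by simp

lemma theta_V_cases:
  assumes "v \<in> theta_V l1 l2 l3"
  obtains (cycle) z where "z < cycle_len" "v = cyc z"
    | (ear) p where "1 \<le> p" "p < len t" "v = Inner t p"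
proof -
  consider "v = EndA" | "v = EndB" | a p where "v = Inner a p" "a \<in> {i, t, k}" "1 \<le> p" "p < len a"
    using assms paths unfolding theta_V_def by blast
  then show thesis
  proof cases
    case 1
    then show thesis using cycle[of 0] cycle_len_ge_3 by (simp add: cyc_def)
  next
    case 2
    then show thesis using cycle[of "len i"] edge_pos len_k by (simp add: cyc_def cycle_len_def)
  next
    case 3
    then consider "a = i" | "a = t" | "a = k" by blast
    then show thesis
    proof cases
      case 1
      then have "v = cyc p" "p < cycle_len"
        using 3 len_k by (auto simp: cyc_def cycle_len_def)
      then show thesis by (rule cycle[rotated])
    next
      case 2
      then show thesis using 3 ear by blast
    next
      case 3
      then have "v = cyc (cycle_len - p)" "cycle_len - p < cycle_len"
        using \<open>v = Inner a p\<close> \<open>1 \<le> p\<close> \<open>p < len a\<close> distinct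
        by (auto simp: cyc_def cycle_len_def)
      then show thesis by (rule cycle[rotated])
    qed
  qed
qed

lemma theta_E_cases:
  assumes "e \<in> theta_E l1 l2 l3"
  obtains (cycle) z where "z < cycle_len" "e = {cyc z, cyc (cyc_succ z)}"
    | (ear) p where "p < len t" "e = {tp t p, tp t (Suc p)}"
proof -
  obtain a p where e: "e = {tp a p, tp a (Suc p)}" "a \<in> {i, t, k}" "p < len a"
    using assms paths unfolding theta_E_def by blast
  then consider "a = i" | "a = t" | "a = k" by blast
  then show thesis
  proof cases
    case 1
    then have "cyc_succ p = Suc p" and "p < cycle_len"
      using e len_k by (auto simp: cyc_succ_def cycle_len_def)
    then show thesis using cycle[of p] e 1 tpos_i by simp
  next
    case 2
    then show thesis using ear e by blast
  next
    case 3
    define z where "z = cycle_len - Suc p"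
    have "z < cycle_len" "cyc_succ z = (if p = 0 then 0 else cycle_len - p)"
      using e 3 edge_pos by (auto simp: z_def cyc_succ_def cycle_len_def)
    moreover have "tp k (Suc p) = cyc z" "tp k p = cyc (if p = 0 then 0 else cycle_len - p)"
      using e 3 tpos_k[of p] tpos_k[of "Suc p"] by (auto simp: z_def)
    ultimately show thesis using cycle[of z] e 3 by auto
  qed
qed

lemma ear_edge_from_cyc:
  assumes "p < len t" "{u, cyc z} = {tp t p, tp t (Suc p)}"
  obtains p' where "1 \<le> p'" "u = Inner t p'"
  using assms len_t cyc_ne_ear that
  by (auto simp: doubleton_eq_iff tpos_def split: if_splits)

lemma cycle_earlier_neighbours:
  assumes z: "z < cycle_len" "z \<noteq> j" "z \<noteq> j + 1"
  shows "earlier_neighbours (cyc z)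
           \<subseteq> insert (cyc (cyc_pred z)) (if z = cyc_pred j then {cyc j} else {})"
proof
  fix u assume "u \<in> earlier_neighbours (cyc z)"
  then have e: "{u, cyc z} \<in> theta_E l1 l2 l3" and less: "rank u < rank (cyc z)"
    by auto
  from e show "u \<in> insert (cyc (cyc_pred z)) (if z = cyc_pred j then {cyc j} else {})"
  proof (cases rule: theta_E_cases)
    case (cycle z')
    then consider "u = cyc z'" "cyc z = cyc (cyc_succ z')" | "u = cyc (cyc_succ z')" "cyc z = cyc z'"
      unfolding doubleton_eq_iff by blast
    then show ?thesis
    proof cases
      case 1
      have "z = cyc_succ z'"
        by (rule cyc_inj[OF z(1) cyc_succ_less[OF cycle(1)] 1(2)])
      then show ?thesis using 1(1) cyc_pred_succ[OF cycle(1)] by simp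
    next
      case 2
      have "z' = z"
        by (rule cyc_inj[OF cycle(1) z(1) 2(2)[symmetric]])
      then have "cyc_rank (cyc_succ z) < cyc_rank z"
        using less 2(1) rank_cyc cyc_succ_less z(1) by simp
      then show ?thesis
        using cyc_rank_succ_lessD[OF z] 2(1) \<open>z' = z\<close> by simp
    qed
  next
    case (ear p)
    then obtain p' where "1 \<le> p'" "u = Inner t p'"
      using ear_edge_from_cyc by blast
    then have "rank (cyc z) < rank u"
      using rank_cyc_less_ear[OF z(1)] by simp
    with less show ?thesis by simp
  qed
qed

lemma ear_earlier_neighbours:
  assumes p: "1 \<le> p" "p < len t"
  shows "earlier_neighbours (Inner t p)
           \<subseteq> insert (tp t (p - 1)) (if Suc p = len t then {EndB} else {})"
proof
  fix u assume "u \<in> earlier_neighbours (Inner t p)"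
  then have e: "{u, Inner t p} \<in> theta_E l1 l2 l3" and less: "rank u < rank (Inner t p)"
    by auto
  from e show "u \<in> insert (tp t (p - 1)) (if Suc p = len t then {EndB} else {})"
  proof (cases rule: theta_E_cases)
    case (cycle z)
    then show ?thesis using cyc_ne_ear by (auto simp: doubleton_eq_iff)
  next
    case (ear p')
    then consider "u = tp t p'" "Inner t p = tp t (Suc p')" | "u = tp t (Suc p')" "Inner t p = tp t p'"
      by (auto simp: doubleton_eq_iff)
    then show ?thesis
    proof cases
      case 1
      then show ?thesis by (auto simp: tpos_def split: if_splits)
    next
      case 2
      then have u: "u = tp t (Suc p)"
        by (auto simp: tpos_def split: if_splits)
      show ?thesis
      proof (cases "Suc p = len t")
        case True
        then show ?thesis using u by (simp add: tpos_def)
      next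
        case False
        then show ?thesis using u less by (simp add: tpos_def rank_ear)
      qed
    qed
  qed
qed

lemma card_earlier_neighbours:
  assumes "v \<in> theta_V l1 l2 l3" "v \<notin> {cyc j, cyc (Suc j)}"
  shows "card (earlier_neighbours v) \<le> back_degree v"
  using assms(1)
proof (cases rule: theta_V_cases)
  case (cycle z)
  then have z: "z \<noteq> j" "z \<noteq> j + 1" using assms(2) by auto
  have "card (earlier_neighbours v)
          \<le> card (insert (cyc (cyc_pred z)) (if z = cyc_pred j then {cyc j} else {}))"
    using cycle_earlier_neighbours[OF cycle(1) z] cycle(2) by (intro card_mono) auto
  also have "\<dots> \<le> back_degree v"
    using cycle cyc_inj[of z "cyc_pred j"] cyc_pred_edge(3) cyc_ne_ear
    by (auto simp: back_degree_def cycle_last_def ear_last_def card_insert_if)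
  finally show ?thesis .
next
  case (ear p)
  have "card (earlier_neighbours v)
          \<le> card (insert (tp t (p - 1)) (if Suc p = len t then {EndB} else {}))"
    using ear_earlier_neighbours[OF ear(1,2)] ear(3) by (intro card_mono) auto
  also have "\<dots> \<le> back_degree v"
    using ear cyc_ne_ear by (auto simp: back_degree_def cycle_last_def ear_last_def card_insert_if)
  finally show ?thesis .
qed

lemma rank_edge_less:
  assumes "v \<in> theta_V l1 l2 l3" "v \<notin> {cyc j, cyc (Suc j)}" "u \<in> {cyc j, cyc (Suc j)}"
  shows "rank u < rank v"
proof -
  have "rank u = 0"
    using assms(3) edge_in_cycle by (auto simp: rank_cyc cyc_rank_def)
  moreover have "0 < rank v"
    using assms(1)
  proof (cases rule: theta_V_cases)
    case (cycle z)
    then show ?thesis using assms(2) cyc_rank_pos rank_cyc by auto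
  qed (simp add: rank_ear)
  ultimately show ?thesis by simp
qed

lemma rank_inj_on: "inj_on rank (theta_V l1 l2 l3 - {cyc j, cyc (Suc j)})"
proof (rule inj_onI)
  fix u v
  assume u: "u \<in> theta_V l1 l2 l3 - {cyc j, cyc (Suc j)}"
    and v: "v \<in> theta_V l1 l2 l3 - {cyc j, cyc (Suc j)}" and eq: "rank u = rank v"
  have ear_rank: "rank (Inner t p) = rank w \<Longrightarrow> 1 \<le> p \<Longrightarrow> w = cyc z \<Longrightarrow> z < cycle_len \<Longrightarrow> False"
    for p w z using rank_cyc_less_ear by fastforce
  from DiffD1[OF u] show "u = v"
  proof (cases rule: theta_V_cases)
    case (cycle z)
    from DiffD1[OF v] show ?thesis
    proof (cases rule: theta_V_cases)
      case (cycle z')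
      then show ?thesis
        using \<open>u = cyc z\<close> \<open>z < cycle_len\<close> u v eq cyc_rank_inj[of z z'] by (auto simp: rank_cyc)
    qed (use cycle eq ear_rank in metis)
  next
    case (ear p)
    from DiffD1[OF v] show ?thesis
    proof (cases rule: theta_V_cases)
      case (cycle z')
      then show ?thesis using ear eq ear_rank by metis
    qed (use ear eq in \<open>simp add: rank_ear\<close>)
  qed
qed

lemma prod_back_degree:
  "(\<Prod>v\<in>theta_V l1 l2 l3 - {cyc j, cyc (Suc j)}. m - back_degree v)
     = (m - 1) ^ (card (theta_V l1 l2 l3) - 4) * (m - 2) ^ 2"
proof -
  define W where "W = theta_V l1 l2 l3 - {cyc j, cyc (Suc j)}"
  define R where "R = W - {cycle_last, ear_last}"
  have "cyc (cyc_pred j) \<noteq> cyc j" "cyc (cyc_pred j) \<noteq> cyc (Suc j)"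
    using cyc_inj[OF cyc_pred_edge(3), of j] cyc_inj[OF cyc_pred_edge(3), of "Suc j"]
      cyc_pred_edge(1,2) edge_in_cycle by auto
  then have cycle_last_W: "cycle_last \<in> W"
    using cyc_in_theta_V[OF cyc_pred_edge(3)] by (simp add: W_def cycle_last_def)
  have ear_last_W: "ear_last \<in> W"
    using ear_in_theta_V[of "len t - 1"] len_t cyc_ne_ear by (auto simp: W_def ear_last_def)
  have lasts_ne: "cycle_last \<noteq> ear_last"
    using cyc_ne_ear by (simp add: cycle_last_def ear_last_def)
  have "card W = card (theta_V l1 l2 l3) - 2"
    using card_Diff_subset[OF _ , of "{cyc j, cyc (Suc j)}" "theta_V l1 l2 l3"] cyc_edge_ne
      cyc_in_theta_V edge_in_cycle by (simp add: W_def)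
  moreover have "card R = card W - 2"
    using card_Diff_subset[of "{cycle_last, ear_last}" W] cycle_last_W ear_last_W lasts_ne
    by (simp add: R_def)
  ultimately have card_R: "card R = card (theta_V l1 l2 l3) - 4"
    by simp
  have W_eq: "W = insert cycle_last (insert ear_last R)"
    using cycle_last_W ear_last_W by (auto simp: R_def)
  have "finite R" "cycle_last \<notin> R" "ear_last \<notin> R"
    using finite_theta_V by (auto simp: R_def W_def)
  then have "(\<Prod>v\<in>W. m - back_degree v) = (m - 2) * ((m - 2) * (\<Prod>v\<in>R. m - back_degree v))"
    unfolding W_eq using lasts_ne by (simp add: back_degree_def)
  also have "(\<Prod>v\<in>R. m - back_degree v) = (\<Prod>v\<in>R. m - 1)"
    by (rule prod.cong) (auto simp: R_def back_degree_def)
  finally show ?thesis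
    using card_R by (simp add: W_def power2_eq_square)
qed

lemma card_colorings_fixing_edge:
  assumes qs: "{q, s} = {tp i j, tp i (Suc j)}"
    and L: "\<forall>v\<in>theta_V l1 l2 l3. finite (L v) \<and> card (L v) = m"
    and "x \<in> L q" "y \<in> L s" "x \<noteq> y"
  shows "(m - 1) ^ (card (theta_V l1 l2 l3) - 4) * (m - 2) ^ 2
           \<le> card {f \<in> proper_L_colorings (theta_V l1 l2 l3) (theta_E l1 l2 l3) L. f q = x \<and> f s = y}"
proof -
  define c where "c = (\<lambda>v. if v = q then x else y)"
  have P: "{q, s} = {cyc j, cyc (Suc j)}"
    using qs tpos_i edge_pos by simp
  then have "q \<noteq> s"
    using cyc_edge_ne by (auto simp: doubleton_eq_iff)
  have P_sub: "{q, s} \<subseteq> theta_V l1 l2 l3"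
    using P cyc_in_theta_V edge_in_cycle by simp
  have "restrict c {q, s} \<in> colorings_extending (theta_E l1 l2 l3) L c {q, s} {q, s}"
    using assms(3-5) \<open>q \<noteq> s\<close> by (intro restrict_in_colorings_extending) (auto simp: c_def)
  moreover have "finite (colorings_extending (theta_E l1 l2 l3) L c {q, s} {q, s})"
    using L P_sub by (intro finite_colorings_extending) auto
  ultimately have "1 \<le> card (colorings_extending (theta_E l1 l2 l3) L c {q, s} {q, s})"
    by (metis One_nat_def Suc_leI card_gt_0_iff empty_iff)
  then have "(m - 1) ^ (card (theta_V l1 l2 l3) - 4) * (m - 2) ^ 2
      \<le> card (colorings_extending (theta_E l1 l2 l3) L c {q, s} {q, s})
         * (\<Prod>v\<in>theta_V l1 l2 l3 - {q, s}. m - back_degree v)"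
    unfolding P prod_back_degree by simp
  also have "\<dots> \<le> card (colorings_extending (theta_E l1 l2 l3) L c {q, s} (theta_V l1 l2 l3))"
    using finite_theta_V P_sub L rank_inj_on rank_edge_less card_earlier_neighbours
    unfolding P by (intro card_colorings_extending_greedy[where r = rank and d = back_degree]) auto
  also have "\<dots> = card {f \<in> proper_L_colorings (theta_V l1 l2 l3) (theta_E l1 l2 l3) L. f q = x \<and> f s = y}"
    unfolding c_def by (subst proper_L_colorings_fixing_pair_eq[OF _ \<open>q \<noteq> s\<close>])
      (auto dest: theta_E_subset_theta_V)
  finally show ?thesis .
qed

end

theorem lemma2p3:
  fixes l1 l2 l3 m :: nat and L :: "tvert \<Rightarrow> 'c set" and q s :: tvert and x y :: 'c
  assumes "l1 \<ge> 1" and "l1 \<le> l2" and "l1 \<le> l3" and "l2 \<ge> 2" and "l3 \<ge> 2"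
    and "m \<ge> 3"
    and "\<forall>v\<in>theta_V l1 l2 l3. finite (L v) \<and> card (L v) = m"
    and "{q, s} \<in> theta_E l1 l2 l3"
    and "x \<in> L q" and "y \<in> L s" and "x \<noteq> y"
  shows "card {f \<in> proper_L_colorings (theta_V l1 l2 l3) (theta_E l1 l2 l3) L. f q = x \<and> f s = y}
           \<ge> (m - 1) ^ (l1 + l2 + l3 - 5) * (m - 2) ^ 2"
proof -
  obtain a j where edge: "{q, s} = {tpos l1 l2 l3 a j, tpos l1 l2 l3 a (Suc j)}"
    and a: "a \<in> {1, 2, 3}" and j: "j < path_len l1 l2 l3 a"
    using assms(8) unfolding theta_E_def by blast
  define t :: nat where "t = (if a = 2 then 3 else 2)"
  define k :: nat where "k = (if a = 1 then 3 else 1)"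
  interpret theta_cycle_ear l1 l2 l3 a t k j
    using a j assms(1,4,5) by unfold_locales (auto simp: t_def k_def path_len_def)
  have "card (theta_V l1 l2 l3) - 4 = l1 + l2 + l3 - 5"
    using card_theta_V assms(1,4,5) by simp
  then show ?thesis
    using card_colorings_fixing_edge[OF edge assms(7,9-11)] by simp
qed

end
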